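(* The class AsLimSup is closed under $\max$, and the class PosLimInf is closed under $\min$.
   Context: A probabilistic weighted automaton over a finite alphabet $\Sigma$ is a tuple $A=(Q,\rho_I,\Sigma,\delta,\gamma)$ where $Q$ is a finite set of states, $\rho_I$ is a probability distribution on $Q$, $\delta:Q\times\Sigma\to\mathcal D(Q)$ assigns to each state and letter a probability distribution on $Q$, and $\gamma:Q\times\Sigma\times Q\to\mathbb Q$ is a weight function. A run over an infinite word $w=\sigma_1\sigma_2\dots$ is a sequence $r=q_0\sigma_1q_1\sigma_2\dots$ with $\rho_I(q_0)>0$ and $\delta(q_i,\sigma_{i+1})(q_{i+1})>0$ for all $i$; its weight sequence is $\gamma(r)=v_0v_1\dots$ with $v_i=\gamma(q_i,\sigma_{i+1},q_{i+1})$. For each $w$, the probabilities of finite run prefixes induce a probability measure $\mathbb P^A$ on runs over $w$. For a value function $\mathrm{Val}$, positive semantics: $L^{>0}_A(w)=\sup\{\eta\mid \mathbb P^A(\{r:\mathrm{Val}(\gamma(r))\ge\eta\})>0\}$; almost-sure semantics: $L^{=1}_A(w)=\sup\{\eta\mid \mathbb P^A(\{r:\mathrm{Val}(\gamma(r))\ge\eta\})=1\}$. $\mathsf{LimSup}(v)=\limsup_n v_n$, $\mathsf{LimInf}(v)=\liminf_n v_n$. AsLimSup is the class of $\mathsf{LimSup}$-automata under almost-sure semantics; PosLimInf is the class of $\mathsf{LimInf}$-automata under positive semantics. A class $\mathcal C$ is closed under $\max$ (resp. $\min$) if for any $A_1,A_2\in\mathcal C$ over the same alphabet there is $A\in\mathcal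 C$ with $L_A(w)=\max\{L_{A_1}(w),L_{A_2}(w)\}$ (resp. $\min$) for all words $w$. *)

theory Defs
  imports "HOL-Probability.Probability"
begin

text \<open>States are drawn
from nat (any finite state set is isomorphic to a finite subset of nat), the
state set is the finite set pwa_states.\<close>

record 'a pwa =
  pwa_states :: "nat set"
  pwa_init   :: "nat pmf"
  pwa_trans  :: "nat \<Rightarrow> 'a \<Rightarrow> nat pmf"
  pwa_weight :: "nat \<Rightarrow> 'a \<Rightarrow> nat \<Rightarrow> rat"

definition wf_pwa :: "'a pwa \<Rightarrow> bool" where
  "wf_pwa A \<longleftrightarrow> finite (pwa_states A) \<and> set_pmf (pwa_init A) \<subseteq> pwa_states A \<and>
     (\<forall>q\<in>pwa_states A. \<forall>\<sigma>. set_pmf (pwa_trans A q \<sigma>) \<subseteq> pwa_states A)"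

text \<open>Infinite words are w :: nat => 'a, where w i is the letter sigma_(i+1).
Runs are state sequences r :: nat => nat, r i = q_i.\<close>

definition run_space :: "(nat \<Rightarrow> nat) measure" where
  "run_space = PiM UNIV (\<lambda>_::nat. count_space (UNIV :: nat set))"

definition prefix_prob :: "'a pwa \<Rightarrow> (nat \<Rightarrow> 'a) \<Rightarrow> nat list \<Rightarrow> real" where
  "prefix_prob A w qs = (case qs of [] \<Rightarrow> 1
     | q0 # _ \<Rightarrow> pmf (pwa_init A) q0 *
          (\<Prod>i<length qs - 1. pmf (pwa_trans A (qs ! i) (w i)) (qs ! Suc i)))"

definition run_measure :: "'a pwa \<Rightarrow> (nat \<Rightarrow> 'a) \<Rightarrow> (nat \<Rightarrow> nat) measure" where
  "run_measure A w = (THE M. sets M = sets run_space \<and>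
     (\<forall>qs. emeasure M {r \<in> space M. \<forall>i<length qs. r i = qs ! i}
              = ennreal (prefix_prob A w qs)))"

definition weight_seq :: "'a pwa \<Rightarrow> (nat \<Rightarrow> 'a) \<Rightarrow> (nat \<Rightarrow> nat) \<Rightarrow> nat \<Rightarrow> real" where
  "weight_seq A w r i = real_of_rat (pwa_weight A (r i) (w i) (r (Suc i)))"

definition LimSupVal :: "(nat \<Rightarrow> real) \<Rightarrow> ereal" where
  "LimSupVal v = limsup (\<lambda>n. ereal (v n))"

definition LimInfVal :: "(nat \<Rightarrow> real) \<Rightarrow> ereal" where
  "LimInfVal v = liminf (\<lambda>n. ereal (v n))"

definition lang_pos :: "((nat \<Rightarrow> real) \<Rightarrow> ereal) \<Rightarrow> 'a pwa \<Rightarrow> (nat \<Rightarrow> 'a) \<Rightarrow> ereal" where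
  "lang_pos Val A w = Sup (ereal ` {\<eta>::real.
      emeasure (run_measure A w) {r \<in> space (run_measure A w). Val (weight_seq A w r) \<ge> ereal \<eta>} > 0})"

definition lang_as :: "((nat \<Rightarrow> real) \<Rightarrow> ereal) \<Rightarrow> 'a pwa \<Rightarrow> (nat \<Rightarrow> 'a) \<Rightarrow> ereal" where
  "lang_as Val A w = Sup (ereal ` {\<eta>::real.
      emeasure (run_measure A w) {r \<in> space (run_measure A w). Val (weight_seq A w r) \<ge> ereal \<eta>} = 1})"

end

theory Submission
  imports Defs
begin

text \<open>Run both automata side by side: the product automaton, whose states encode pairs of
states, has as run measure the image of the product of the two run measures, and its weight
at every step is the max (resp. min) of the two component weights.  Since LimSup commutes
with max and LimInf with min, a threshold event of the product is the union (resp.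
intersection) of two independent threshold events.  A union of independent events is almost
sure iff one of them is, and an intersection of independent events has positive probability
iff both have.  Finally, the sets of admissible thresholds are downward closed, so the
supremum over a union (resp. intersection) is the max (resp. min) of the suprema.\<close>

subsection \<open>Cylinder sets\<close>

definition cylinder :: "nat list \<Rightarrow> (nat \<Rightarrow> nat) set" where
  "cylinder qs = {r. \<forall>i<length qs. r i = qs ! i}"

lemma space_run_space [simp]: "space run_space = UNIV"
  by (simp add: run_space_def space_PiM)

lemma measurable_run_space_component [measurable]:
  "(\<lambda>r. r i) \<in> run_space \<rightarrow>\<^sub>M count_space UNIV"
  unfolding run_space_def by measurable

lemma sets_cylinder [measurable]: "cylinder qs \<in> sets run_space"
proof -
  have "cylinder qs = {r \<in> space run_space. \<forall>i\<in>{..<length qs}. r i = qs ! i}"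
    by (auto simp: cylinder_def)
  also have "\<dots> \<in> sets run_space"
    by measurable
  finally show ?thesis .
qed

definition cylinders :: "(nat \<Rightarrow> nat) set set" where
  "cylinders = insert {} (range cylinder)"

lemma Int_stable_cylinders: "Int_stable cylinders"
proof (rule Int_stableI)
  fix a b assume "a \<in> cylinders" "b \<in> cylinders"
  show "a \<inter> b \<in> cylinders"
  proof (cases "a \<inter> b = {}")
    case False
    with \<open>a \<in> cylinders\<close> \<open>b \<in> cylinders\<close> obtain ps qs r
      where ab: "a = cylinder ps" "b = cylinder qs" and r: "r \<in> a \<inter> b"
      by (auto simp: cylinders_def)
    have "a \<inter> b = cylinder (map r [0..<max (length ps) (length qs)])"
      using r unfolding ab cylinder_def
      by (auto simp: nth_map) (metis less_max_iff_disj)+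
    thus ?thesis by (simp add: cylinders_def)
  qed (simp add: cylinders_def)
qed

lemma component_set_in_sigma_cylinders:
  "{r. r i \<in> X} \<in> sigma_sets UNIV cylinders"
proof -
  let ?C = "cylinder ` {qs. length qs = Suc i \<and> qs ! i \<in> X}"
  have "{r. r i \<in> X} = \<Union>?C"
  proof safe
    fix r assume "r i \<in> X"
    thus "r \<in> \<Union>?C"
      by (intro UnionI[of "cylinder (map r [0..<Suc i])"] imageI)
         (auto simp: cylinder_def simp del: upt_Suc)
  qed (auto simp: cylinder_def)
  moreover have "countable ?C"
    by (rule countable_image, rule countable_subset[of _ "lists UNIV"]) auto
  hence "\<Union>?C \<in> sigma_sets UNIV cylinders"
    by (rule sigma_sets_UNION) (auto simp: cylinders_def intro: sigma_sets.Basic)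
  ultimately show ?thesis by simp
qed

lemma sets_run_space_eq_sigma_cylinders: "sets run_space = sigma_sets UNIV cylinders"
proof
  have "cylinders \<subseteq> sets run_space"
    by (auto simp: cylinders_def)
  from sets.sigma_sets_subset'[OF this, of UNIV] sets.top[of run_space]
  show "sigma_sets UNIV cylinders \<subseteq> sets run_space" by simp
next
  have "sets run_space = sigma_sets UNIV {{r. r i \<in> X} | i X. True}"
    by (simp add: run_space_def sets_PiM_single)
  also have "\<dots> \<subseteq> sigma_sets UNIV cylinders"
    by (rule sigma_sets_mono) (use component_set_in_sigma_cylinders in auto)
  finally show "sets run_space \<subseteq> sigma_sets UNIV cylinders" .
qed

subsection \<open>The run measure\<close>

definition is_run_measure :: "'a pwa \<Rightarrow> (nat \<Rightarrow> 'a) \<Rightarrow> (nat \<Rightarrow> nat) measure \<Rightarrow> bool" where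
  "is_run_measure A w M \<longleftrightarrow> sets M = sets run_space \<and>
     (\<forall>qs. emeasure M (cylinder qs) = ennreal (prefix_prob A w qs))"

lemma run_measure_eq_The_is_run_measure: "run_measure A w = The (is_run_measure A w)"
proof -
  have "is_run_measure A w = (\<lambda>M. sets M = sets run_space \<and>
     (\<forall>qs. emeasure M {r \<in> space M. \<forall>i<length qs. r i = qs ! i} = ennreal (prefix_prob A w qs)))"
    using sets_eq_imp_space_eq[of _ run_space]
    by (intro ext) (auto simp: is_run_measure_def cylinder_def)
  thus ?thesis by (simp add: run_measure_def)
qed

lemma is_run_measure_unique:
  assumes "is_run_measure A w M" "is_run_measure A w N"
  shows "M = N"
proof (rule measure_eqI_generator_eq[OF Int_stable_cylinders, where A = "\<lambda>_. UNIV"])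
  show "sets M = sigma_sets UNIV cylinders" "sets N = sigma_sets UNIV cylinders"
    using assms by (simp_all add: is_run_measure_def sets_run_space_eq_sigma_cylinders)
  have "cylinder [] = UNIV" by (simp add: cylinder_def)
  thus "range (\<lambda>_. UNIV) \<subseteq> cylinders" "emeasure M UNIV \<noteq> \<infinity>" for i :: nat
    using assms(1) by (auto simp: cylinders_def is_run_measure_def dest: spec[of _ "[]"])
  show "emeasure M X = emeasure N X" if "X \<in> cylinders" for X
    using that assms by (auto simp: cylinders_def is_run_measure_def)
qed auto

text \<open>Since \<open>run_measure\<close> is a definite description, it also has to be shown to exist.
Sample independently, for every time \<open>i\<close> and state \<open>q\<close>, the state \<open>\<omega> (Suc i, q)\<close> that a run
in state \<open>q\<close> at time \<open>i\<close> moves to, and an initial state \<open>\<omega> (0, 0)\<close>; the run is read off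
by following these choices.\<close>

fun choice_pmf :: "'a pwa \<Rightarrow> (nat \<Rightarrow> 'a) \<Rightarrow> nat \<times> nat \<Rightarrow> nat pmf" where
  "choice_pmf A w (0, q) = pwa_init A"
| "choice_pmf A w (Suc i, q) = pwa_trans A q (w i)"

definition choice_measure :: "'a pwa \<Rightarrow> (nat \<Rightarrow> 'a) \<Rightarrow> (nat \<times> nat \<Rightarrow> nat) measure" where
  "choice_measure A w = PiM UNIV (\<lambda>j. measure_pmf (choice_pmf A w j))"

fun run_of_choices :: "(nat \<times> nat \<Rightarrow> nat) \<Rightarrow> nat \<Rightarrow> nat" where
  "run_of_choices \<omega> 0 = \<omega> (0, 0)"
| "run_of_choices \<omega> (Suc i) = \<omega> (Suc i, run_of_choices \<omega> i)"

lemma space_choice_measure [simp]: "space (choice_measure A w) = UNIV"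
  by (simp add: choice_measure_def space_PiM)

lemma prob_space_choice_measure: "prob_space (choice_measure A w)"
  unfolding choice_measure_def
  by (rule prob_space_PiM) (simp add: prob_space_measure_pmf)

lemma measurable_choice_measure_component:
  "(\<lambda>\<omega>. \<omega> j) \<in> choice_measure A w \<rightarrow>\<^sub>M count_space UNIV"
proof -
  have "(\<lambda>\<omega>. \<omega> j) \<in> choice_measure A w \<rightarrow>\<^sub>M measure_pmf (choice_pmf A w j)"
    unfolding choice_measure_def by (rule measurable_component_singleton) simp
  thus ?thesis by (simp add: measurable_def)
qed

lemma measurable_run_of_choices: "run_of_choices \<in> choice_measure A w \<rightarrow>\<^sub>M run_space"
proof -
  have "(\<lambda>\<omega>. run_of_choices \<omega> i) \<in> choice_measure A w \<rightarrow>\<^sub>M count_space UNIV" for i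
  proof (induction i)
    case (Suc i)
    have "(\<lambda>\<omega>. (\<lambda>q \<omega>. \<omega> (Suc i, q)) (run_of_choices \<omega> i) \<omega>) \<in> choice_measure A w \<rightarrow>\<^sub>M count_space UNIV"
      by (rule measurable_compose_countable[OF measurable_choice_measure_component Suc])
    thus ?case by simp
  qed (simp add: measurable_choice_measure_component)
  hence "(\<lambda>\<omega> i. run_of_choices \<omega> i) \<in> choice_measure A w \<rightarrow>\<^sub>M run_space"
    unfolding run_space_def by (intro measurable_PiM_single') auto
  thus ?thesis by simp
qed

lemma run_of_choices_prefix_iff:
  assumes "k < length qs"
  shows "(\<forall>i\<le>k. run_of_choices \<omega> i = qs ! i) \<longleftrightarrow>
     \<omega> (0, 0) = qs ! 0 \<and> (\<forall>i<k. \<omega> (Suc i, qs ! i) = qs ! Suc i)"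
  using assms
proof (induction k)
  case (Suc k)
  have "(\<forall>i\<le>Suc k. run_of_choices \<omega> i = qs ! i) \<longleftrightarrow>
      (\<forall>i\<le>k. run_of_choices \<omega> i = qs ! i) \<and> run_of_choices \<omega> (Suc k) = qs ! Suc k"
    by (auto simp: le_Suc_eq)
  also have "\<dots> \<longleftrightarrow> (\<forall>i\<le>k. run_of_choices \<omega> i = qs ! i) \<and> \<omega> (Suc k, qs ! k) = qs ! Suc k"
    by auto
  finally show ?case using Suc by (auto simp: less_Suc_eq)
qed simp

lemma emeasure_choice_measure_vimage_cylinder:
  "emeasure (choice_measure A w) (run_of_choices -` cylinder qs) = ennreal (prefix_prob A w qs)"
proof (cases qs)
  case Nil
  then show ?thesis
    using prob_space.emeasure_space_1[OF prob_space_choice_measure, of A w]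
    by (simp add: cylinder_def prefix_prob_def)
next
  case (Cons q0 rest)
  define n where "n = length qs - 1"
  define g where "g i = (Suc i, qs ! i)" for i
  define J where "J = insert (0, 0) (g ` {..<n})"
  define X where "X j = (case j of (0, _) \<Rightarrow> {q0} | (Suc i, _) \<Rightarrow> {qs ! Suc i})"
    for j :: "nat \<times> nat"
  let ?M = "\<lambda>j. measure_pmf (choice_pmf A w j)"
  have "run_of_choices -` cylinder qs = {\<omega>. \<forall>i\<le>n. run_of_choices \<omega> i = qs ! i}"
    using Cons by (auto simp: cylinder_def n_def less_Suc_eq_le)
  also have "\<dots> = prod_emb UNIV ?M J (PiE J X)"
    using run_of_choices_prefix_iff[of n qs] Cons
    by (auto simp: n_def prod_emb_iff J_def X_def g_def PiE_iff space_PiM split: prod.splits)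
  also have "emeasure (choice_measure A w) \<dots> = (\<Prod>j\<in>J. emeasure (?M j) (X j))"
    unfolding choice_measure_def
    by (rule emeasure_PiM_emb) (auto simp: J_def prob_space_measure_pmf)
  also have "\<dots> = emeasure (?M (0, 0)) (X (0, 0)) * (\<Prod>i<n. emeasure (?M (g i)) (X (g i)))"
  proof -
    have "inj_on g {..<n}" "(0, 0) \<notin> g ` {..<n}"
      by (auto simp: g_def inj_on_def)
    thus ?thesis by (simp add: J_def prod.reindex)
  qed
  also have "\<dots> = ennreal (pmf (pwa_init A) q0) *
      (\<Prod>i<n. ennreal (pmf (pwa_trans A (qs ! i) (w i)) (qs ! Suc i)))"
    by (simp add: X_def g_def emeasure_pmf_single)
  also have "\<dots> = ennreal (prefix_prob A w qs)"
    by (simp add: prefix_prob_def Cons n_def prod_ennreal ennreal_mult prod_nonneg)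
  finally show ?thesis .
qed

lemma is_run_measure_distr_run_of_choices:
  "is_run_measure A w (distr (choice_measure A w) run_space run_of_choices)"
  by (simp add: is_run_measure_def emeasure_distr[OF measurable_run_of_choices]
      emeasure_choice_measure_vimage_cylinder)

lemma run_measure_eqI: "is_run_measure A w M \<Longrightarrow> run_measure A w = M"
  unfolding run_measure_eq_The_is_run_measure
  by (rule the_equality) (auto intro: is_run_measure_unique)

lemma is_run_measure_run_measure: "is_run_measure A w (run_measure A w)"
  using is_run_measure_distr_run_of_choices run_measure_eqI by metis

lemma sets_run_measure [simp, measurable_cong]: "sets (run_measure A w) = sets run_space"
  using is_run_measure_run_measure[of A w] by (simp add: is_run_measure_def)

lemma space_run_measure [simp]: "space (run_measure A w) = UNIV"
  using sets_eq_imp_space_eq[OF sets_run_measure] by simp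

lemma emeasure_run_measure_cylinder:
  "emeasure (run_measure A w) (cylinder qs) = ennreal (prefix_prob A w qs)"
  using is_run_measure_run_measure[of A w] by (simp add: is_run_measure_def)

lemma prob_space_run_measure: "prob_space (run_measure A w)"
proof -
  interpret prob_space "choice_measure A w" by (rule prob_space_choice_measure)
  show ?thesis
    unfolding run_measure_eqI[OF is_run_measure_distr_run_of_choices]
    by (rule prob_space_distr[OF measurable_run_of_choices])
qed

subsection \<open>The product automaton\<close>

definition pwa_product :: "(rat \<Rightarrow> rat \<Rightarrow> rat) \<Rightarrow> 'a pwa \<Rightarrow> 'a pwa \<Rightarrow> 'a pwa" where
  "pwa_product f A1 A2 = \<lparr>pwa_states = prod_encode ` (pwa_states A1 \<times> pwa_states A2),
     pwa_init = map_pmf prod_encode (pair_pmf (pwa_init A1) (pwa_init A2)),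
     pwa_trans = (\<lambda>q \<sigma>. map_pmf prod_encode (pair_pmf (pwa_trans A1 (fst (prod_decode q)) \<sigma>)
                                                     (pwa_trans A2 (snd (prod_decode q)) \<sigma>))),
     pwa_weight = (\<lambda>q \<sigma> q'. f (pwa_weight A1 (fst (prod_decode q)) \<sigma> (fst (prod_decode q')))
                               (pwa_weight A2 (snd (prod_decode q)) \<sigma> (snd (prod_decode q'))))\<rparr>"

lemma wf_pwa_product: "wf_pwa A1 \<Longrightarrow> wf_pwa A2 \<Longrightarrow> wf_pwa (pwa_product f A1 A2)"
  unfolding wf_pwa_def pwa_product_def
  by (fastforce simp: prod_encode_inverse)

lemma pmf_map_prod_encode_pair_pmf:
  "pmf (map_pmf prod_encode (pair_pmf p1 p2)) q = pmf p1 (fst (prod_decode q)) * pmf p2 (snd (prod_decode q))"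
proof -
  have "pmf (map_pmf prod_encode (pair_pmf p1 p2)) (prod_encode (prod_decode q)) = pmf (pair_pmf p1 p2) (prod_decode q)"
    by (rule pmf_map_inj') (rule inj_prod_encode)
  thus ?thesis by (metis pmf_pair prod.collapse prod_decode_inverse)
qed

lemma prefix_prob_nonempty:
  "qs \<noteq> [] \<Longrightarrow> prefix_prob A w qs =
     pmf (pwa_init A) (qs ! 0) * (\<Prod>i<length qs - 1. pmf (pwa_trans A (qs ! i) (w i)) (qs ! Suc i))"
  by (cases qs) (simp_all add: prefix_prob_def)

lemma prefix_prob_pwa_product:
  "prefix_prob (pwa_product f A1 A2) w qs =
     prefix_prob A1 w (map (fst \<circ> prod_decode) qs) * prefix_prob A2 w (map (snd \<circ> prod_decode) qs)"
proof (cases "qs = []")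
  case False
  let ?qs1 = "map (fst \<circ> prod_decode) qs" and ?qs2 = "map (snd \<circ> prod_decode) qs"
  have "pmf (pwa_init (pwa_product f A1 A2)) (qs ! 0) = pmf (pwa_init A1) (?qs1 ! 0) * pmf (pwa_init A2) (?qs2 ! 0)"
    using False by (simp add: pwa_product_def pmf_map_prod_encode_pair_pmf nth_map)
  moreover have "pmf (pwa_trans (pwa_product f A1 A2) (qs ! i) (w i)) (qs ! Suc i) =
      pmf (pwa_trans A1 (?qs1 ! i) (w i)) (?qs1 ! Suc i) * pmf (pwa_trans A2 (?qs2 ! i) (w i)) (?qs2 ! Suc i)"
    if "i < length qs - 1" for i
    using that by (simp add: pwa_product_def pmf_map_prod_encode_pair_pmf)
  ultimately show ?thesis
    using False by (simp add: prefix_prob_nonempty prod.distrib)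
qed (simp add: prefix_prob_def)

lemma prefix_prob_nonneg: "0 \<le> prefix_prob A w qs"
  by (simp add: prefix_prob_def prod_nonneg split: list.split)

definition pair_runs :: "(nat \<Rightarrow> nat) \<times> (nat \<Rightarrow> nat) \<Rightarrow> nat \<Rightarrow> nat" where
  "pair_runs rr i = prod_encode (fst rr i, snd rr i)"

lemma vimage_pair_runs_cylinder:
  "pair_runs -` cylinder qs = cylinder (map (fst \<circ> prod_decode) qs) \<times> cylinder (map (snd \<circ> prod_decode) qs)"
proof -
  have "prod_encode (a, b) = q \<longleftrightarrow> a = fst (prod_decode q) \<and> b = snd (prod_decode q)" for a b q
    by (metis fst_conv snd_conv prod.collapse prod_decode_inverse prod_encode_inverse)
  thus ?thesis by (auto simp: pair_runs_def cylinder_def)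
qed

lemma measurable_pair_runs:
  assumes "sets M1 = sets run_space" "sets M2 = sets run_space"
  shows "pair_runs \<in> M1 \<Otimes>\<^sub>M M2 \<rightarrow>\<^sub>M run_space"
proof -
  have [measurable]: "(\<lambda>r. r i) \<in> M1 \<rightarrow>\<^sub>M count_space UNIV" "(\<lambda>r. r i) \<in> M2 \<rightarrow>\<^sub>M count_space UNIV"
    for i using measurable_run_space_component
    by (simp_all add: measurable_cong_sets[OF assms(1) refl] measurable_cong_sets[OF assms(2) refl])
  have "(\<lambda>rr. (fst rr i, snd rr i)) \<in> M1 \<Otimes>\<^sub>M M2 \<rightarrow>\<^sub>M count_space UNIV \<Otimes>\<^sub>M count_space UNIV" for i
    by measurable
  hence "(\<lambda>rr. prod_encode (fst rr i, snd rr i)) \<in> M1 \<Otimes>\<^sub>M M2 \<rightarrow>\<^sub>M count_space UNIV" for i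
    by (simp add: pair_measure_countable measurable_compose[where g = prod_encode])
  hence "(\<lambda>rr i. prod_encode (fst rr i, snd rr i)) \<in> M1 \<Otimes>\<^sub>M M2 \<rightarrow>\<^sub>M run_space"
    unfolding run_space_def by (intro measurable_PiM_single') auto
  thus ?thesis by (simp add: pair_runs_def[abs_def])
qed

lemma run_measure_pwa_product:
  "run_measure (pwa_product f A1 A2) w =
     distr (run_measure A1 w \<Otimes>\<^sub>M run_measure A2 w) run_space pair_runs"
proof (rule run_measure_eqI, unfold is_run_measure_def, intro conjI allI)
  interpret p2: prob_space "run_measure A2 w" by (rule prob_space_run_measure)
  fix qs
  have "emeasure (distr (run_measure A1 w \<Otimes>\<^sub>M run_measure A2 w) run_space pair_runs) (cylinder qs)
      = emeasure (run_measure A1 w) (cylinder (map (fst \<circ> prod_decode) qs)) *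
        emeasure (run_measure A2 w) (cylinder (map (snd \<circ> prod_decode) qs))"
    by (simp add: emeasure_distr measurable_pair_runs vimage_pair_runs_cylinder
        space_pair_measure p2.emeasure_pair_measure_Times)
  also have "\<dots> = ennreal (prefix_prob (pwa_product f A1 A2) w qs)"
    by (simp add: emeasure_run_measure_cylinder prefix_prob_pwa_product ennreal_mult prefix_prob_nonneg)
  finally show "emeasure (distr (run_measure A1 w \<Otimes>\<^sub>M run_measure A2 w) run_space pair_runs) (cylinder qs)
      = ennreal (prefix_prob (pwa_product f A1 A2) w qs)" .
qed simp

lemma emeasure_run_measure_pwa_product:
  "E \<in> sets run_space \<Longrightarrow> emeasure (run_measure (pwa_product f A1 A2) w) E =
     emeasure (run_measure A1 w \<Otimes>\<^sub>M run_measure A2 w) (pair_runs -` E)"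
  by (simp add: run_measure_pwa_product emeasure_distr measurable_pair_runs space_pair_measure)

lemma weight_seq_pwa_product:
  "weight_seq (pwa_product f A1 A2) w (pair_runs (r1, r2)) i =
     real_of_rat (f (pwa_weight A1 (r1 i) (w i) (r1 (Suc i))) (pwa_weight A2 (r2 i) (w i) (r2 (Suc i))))"
  by (simp add: weight_seq_def pwa_product_def pair_runs_def)

lemma Limsup_max:
  fixes X Y :: "'b \<Rightarrow> 'a::{complete_linorder, linorder_topology}"
  shows "Limsup F (\<lambda>x. max (X x) (Y x)) = max (Limsup F X) (Limsup F Y)"
proof (rule antisym)
  show "max (Limsup F X) (Limsup F Y) \<le> Limsup F (\<lambda>x. max (X x) (Y x))"
    by (intro max.boundedI Limsup_mono) auto
  show "Limsup F (\<lambda>x. max (X x) (Y x)) \<le> max (Limsup F X) (Limsup F Y)"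
    unfolding Limsup_le_iff
  proof (intro allI impI)
    fix y assume "max (Limsup F X) (Limsup F Y) < y"
    hence "eventually (\<lambda>x. X x < y) F" "eventually (\<lambda>x. Y x < y) F"
      by (auto intro: Limsup_lessD)
    thus "eventually (\<lambda>x. max (X x) (Y x) < y) F"
      by eventually_elim simp
  qed
qed

lemma Liminf_min:
  fixes X Y :: "'b \<Rightarrow> 'a::{complete_linorder, linorder_topology}"
  shows "Liminf F (\<lambda>x. min (X x) (Y x)) = min (Liminf F X) (Liminf F Y)"
proof (rule antisym)
  show "Liminf F (\<lambda>x. min (X x) (Y x)) \<le> min (Liminf F X) (Liminf F Y)"
    by (intro min.boundedI Liminf_mono) auto
  show "min (Liminf F X) (Liminf F Y) \<le> Liminf F (\<lambda>x. min (X x) (Y x))"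
    unfolding le_Liminf_iff
  proof (intro allI impI)
    fix y assume "y < min (Liminf F X) (Liminf F Y)"
    hence "eventually (\<lambda>x. y < X x) F" "eventually (\<lambda>x. y < Y x) F"
      by (auto intro: less_LiminfD)
    thus "eventually (\<lambda>x. y < min (X x) (Y x)) F"
      by eventually_elim simp
  qed
qed

lemma LimSupVal_weight_seq_pwa_product_max:
  "LimSupVal (weight_seq (pwa_product max A1 A2) w (pair_runs (r1, r2))) =
     max (LimSupVal (weight_seq A1 w r1)) (LimSupVal (weight_seq A2 w r2))"
proof -
  have "ereal (weight_seq (pwa_product max A1 A2) w (pair_runs (r1, r2)) n) =
      max (ereal (weight_seq A1 w r1 n)) (ereal (weight_seq A2 w r2 n))" for n
    by (subst weight_seq_pwa_product) (simp add: weight_seq_def of_rat_less_eq max_def)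
  thus ?thesis by (simp add: LimSupVal_def Limsup_max)
qed

lemma LimInfVal_weight_seq_pwa_product_min:
  "LimInfVal (weight_seq (pwa_product min A1 A2) w (pair_runs (r1, r2))) =
     min (LimInfVal (weight_seq A1 w r1)) (LimInfVal (weight_seq A2 w r2))"
proof -
  have "ereal (weight_seq (pwa_product min A1 A2) w (pair_runs (r1, r2)) n) =
      min (ereal (weight_seq A1 w r1 n)) (ereal (weight_seq A2 w r2 n))" for n
    by (subst weight_seq_pwa_product) (simp add: weight_seq_def of_rat_less_eq min_def)
  thus ?thesis by (simp add: LimInfVal_def Liminf_min)
qed

subsection \<open>Threshold events\<close>

definition threshold_event ::
    "((nat \<Rightarrow> real) \<Rightarrow> ereal) \<Rightarrow> 'a pwa \<Rightarrow> (nat \<Rightarrow> 'a) \<Rightarrow> real \<Rightarrow> (nat \<Rightarrow> nat) set" where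
  "threshold_event Val A w \<eta> = {r. ereal \<eta> \<le> Val (weight_seq A w r)}"

lemma lang_as_eq_Sup_threshold_event:
  "lang_as Val A w = Sup (ereal ` {\<eta>. emeasure (run_measure A w) (threshold_event Val A w \<eta>) = 1})"
  by (simp add: lang_as_def threshold_event_def)

lemma lang_pos_eq_Sup_threshold_event:
  "lang_pos Val A w = Sup (ereal ` {\<eta>. emeasure (run_measure A w) (threshold_event Val A w \<eta>) > 0})"
  by (simp add: lang_pos_def threshold_event_def)

lemma borel_measurable_weight_seq [measurable]:
  "(\<lambda>r. weight_seq A w r i) \<in> borel_measurable run_space"
  unfolding weight_seq_def
  by (rule measurable_compose_countable[where g = "\<lambda>r. r i"]) measurable

lemma borel_measurable_LimSupVal_weight_seq:
  "(\<lambda>r. LimSupVal (weight_seq A w r)) \<in> borel_measurable run_space"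
  unfolding LimSupVal_def by measurable

lemma borel_measurable_LimInfVal_weight_seq:
  "(\<lambda>r. LimInfVal (weight_seq A w r)) \<in> borel_measurable run_space"
  unfolding LimInfVal_def by measurable

lemma sets_threshold_event:
  assumes [measurable]: "(\<lambda>r. Val (weight_seq A w r)) \<in> borel_measurable run_space"
  shows "threshold_event Val A w \<eta> \<in> sets run_space"
proof -
  have "{r \<in> space run_space. ereal \<eta> \<le> Val (weight_seq A w r)} \<in> sets run_space"
    by measurable
  thus ?thesis by (simp add: threshold_event_def)
qed

lemma threshold_event_antimono:
  "\<eta> \<le> \<eta>' \<Longrightarrow> threshold_event Val A w \<eta>' \<subseteq> threshold_event Val A w \<eta>"
  by (auto simp: threshold_event_def intro: order_trans[rotated])

lemma vimage_pair_runs_threshold_event_max: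
  "pair_runs -` threshold_event LimSupVal (pwa_product max A1 A2) w \<eta> =
     threshold_event LimSupVal A1 w \<eta> \<times> UNIV \<union> UNIV \<times> threshold_event LimSupVal A2 w \<eta>"
  by (auto simp: threshold_event_def LimSupVal_weight_seq_pwa_product_max le_max_iff_disj)

lemma vimage_pair_runs_threshold_event_min:
  "pair_runs -` threshold_event LimInfVal (pwa_product min A1 A2) w \<eta> =
     threshold_event LimInfVal A1 w \<eta> \<times> threshold_event LimInfVal A2 w \<eta>"
  by (auto simp: threshold_event_def LimInfVal_weight_seq_pwa_product_min)

lemma (in prob_space) emeasure_eq_1_iff_emeasure_compl_eq_0:
  "E \<in> events \<Longrightarrow> emeasure M E = 1 \<longleftrightarrow> emeasure M (space M - E) = 0"
proof -
  assume "E \<in> events"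
  hence "emeasure M (space M - E) = 0 \<longleftrightarrow> 1 \<le> prob E"
    by (simp add: prob_compl emeasure_eq_measure ennreal_eq_0_iff)
  moreover have "prob E \<le> 1" by (rule prob_le_1)
  ultimately show ?thesis by (auto simp: emeasure_eq_measure)
qed

lemma emeasure_pair_measure_Un_eq_1_iff:
  assumes "prob_space M1" "prob_space M2" "X \<in> sets M1" "Y \<in> sets M2"
  shows "emeasure (M1 \<Otimes>\<^sub>M M2) (X \<times> space M2 \<union> space M1 \<times> Y) = 1 \<longleftrightarrow>
     emeasure M1 X = 1 \<or> emeasure M2 Y = 1"
proof -
  interpret p1: prob_space M1 by fact
  interpret p2: prob_space M2 by fact
  interpret pair_prob_space M1 M2 ..
  let ?U = "X \<times> space M2 \<union> space M1 \<times> Y"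
  have compl: "space M1 - X \<in> sets M1" "space M2 - Y \<in> sets M2"
    using assms by auto
  have "?U \<in> sets (M1 \<Otimes>\<^sub>M M2)"
    using assms by auto
  moreover have "space (M1 \<Otimes>\<^sub>M M2) - ?U = (space M1 - X) \<times> (space M2 - Y)"
    using assms(3,4)[THEN sets.sets_into_space] by (auto simp: space_pair_measure)
  ultimately have "emeasure (M1 \<Otimes>\<^sub>M M2) ?U = 1 \<longleftrightarrow>
      emeasure (M1 \<Otimes>\<^sub>M M2) ((space M1 - X) \<times> (space M2 - Y)) = 0"
    by (simp add: P.emeasure_eq_1_iff_emeasure_compl_eq_0)
  also have "\<dots> \<longleftrightarrow> emeasure M1 (space M1 - X) = 0 \<or> emeasure M2 (space M2 - Y) = 0"
    by (simp add: p2.emeasure_pair_measure_Times compl)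
  also have "\<dots> \<longleftrightarrow> emeasure M1 X = 1 \<or> emeasure M2 Y = 1"
    using assms p1.emeasure_eq_1_iff_emeasure_compl_eq_0 p2.emeasure_eq_1_iff_emeasure_compl_eq_0
    by simp
  finally show ?thesis .
qed

lemma Sup_ereal_Int_downward_closed:
  fixes S T :: "real set"
  assumes "\<And>x y. x \<in> S \<Longrightarrow> y \<le> x \<Longrightarrow> y \<in> S"
    and "\<And>x y. x \<in> T \<Longrightarrow> y \<le> x \<Longrightarrow> y \<in> T"
  shows "Sup (ereal ` (S \<inter> T)) = min (Sup (ereal ` S)) (Sup (ereal ` T))"
proof -
  have "S \<subseteq> T \<or> T \<subseteq> S"
    using assms by (meson linear subsetI)
  thus ?thesis
    by (metis Int_absorb1 Int_absorb2 Sup_subset_mono image_mono min_absorb1 min_absorb2)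
qed

lemma lang_as_LimSupVal_pwa_product_max:
  "lang_as LimSupVal (pwa_product max A1 A2) w = max (lang_as LimSupVal A1 w) (lang_as LimSupVal A2 w)"
proof -
  have sets: "threshold_event LimSupVal A w \<eta> \<in> sets run_space" for A :: "'a pwa" and \<eta>
    by (simp add: sets_threshold_event borel_measurable_LimSupVal_weight_seq)
  have "emeasure (run_measure (pwa_product max A1 A2) w) (threshold_event LimSupVal (pwa_product max A1 A2) w \<eta>) = 1
      \<longleftrightarrow> emeasure (run_measure A1 w) (threshold_event LimSupVal A1 w \<eta>) = 1
        \<or> emeasure (run_measure A2 w) (threshold_event LimSupVal A2 w \<eta>) = 1" for \<eta>
    using emeasure_pair_measure_Un_eq_1_iff[OF prob_space_run_measure prob_space_run_measure,
        where X = "threshold_event LimSupVal A1 w \<eta>" and Y = "threshold_event LimSupVal A2 w \<eta>"]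
    by (simp add: sets emeasure_run_measure_pwa_product vimage_pair_runs_threshold_event_max)
  thus ?thesis
    by (simp add: lang_as_eq_Sup_threshold_event Collect_disj_eq image_Un Sup_union_distrib sup_max)
qed

lemma lang_pos_LimInfVal_pwa_product_min:
  "lang_pos LimInfVal (pwa_product min A1 A2) w = min (lang_pos LimInfVal A1 w) (lang_pos LimInfVal A2 w)"
proof -
  interpret p2: prob_space "run_measure A2 w" by (rule prob_space_run_measure)
  let ?pos = "\<lambda>A. {\<eta>. emeasure (run_measure A w) (threshold_event LimInfVal A w \<eta>) > 0}"
  have pos_product: "?pos (pwa_product min A1 A2) = ?pos A1 \<inter> ?pos A2"
    by (simp add: emeasure_run_measure_pwa_product sets_threshold_event
        borel_measurable_LimInfVal_weight_seq vimage_pair_runs_threshold_event_min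
        p2.emeasure_pair_measure_Times ennreal_zero_less_mult_iff Collect_conj_eq)
  have pos_downward_closed: "\<eta>' \<in> ?pos A" if "\<eta> \<in> ?pos A" "\<eta>' \<le> \<eta>" for A :: "'a pwa" and \<eta> \<eta>'
  proof -
    have "emeasure (run_measure A w) (threshold_event LimInfVal A w \<eta>)
        \<le> emeasure (run_measure A w) (threshold_event LimInfVal A w \<eta>')"
      by (rule emeasure_mono[OF threshold_event_antimono[OF \<open>\<eta>' \<le> \<eta>\<close>]])
         (simp add: sets_threshold_event borel_measurable_LimInfVal_weight_seq)
    with \<open>\<eta> \<in> ?pos A\<close> show ?thesis by auto
  qed
  show ?thesis
    unfolding lang_pos_eq_Sup_threshold_event pos_product
    by (rule Sup_ereal_Int_downward_closed) (rule pos_downward_closed; assumption)+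
qed

theorem lemma17:
  shows "(\<forall>A1 A2 :: ('a::finite) pwa. wf_pwa A1 \<and> wf_pwa A2 \<longrightarrow>
            (\<exists>A :: 'a pwa. wf_pwa A \<and>
               (\<forall>w. lang_as LimSupVal A w = max (lang_as LimSupVal A1 w) (lang_as LimSupVal A2 w))))
       \<and> (\<forall>A1 A2 :: ('a::finite) pwa. wf_pwa A1 \<and> wf_pwa A2 \<longrightarrow>
            (\<exists>A :: 'a pwa. wf_pwa A \<and>
               (\<forall>w. lang_pos LimInfVal A w = min (lang_pos LimInfVal A1 w) (lang_pos LimInfVal A2 w))))"
  by (metis wf_pwa_product lang_as_LimSupVal_pwa_product_max lang_pos_LimInfVal_pwa_product_min)

end
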